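(* Fix a query-answering mechanism $\mathcal K$. Suppose that for each $j=1,\ldots,k$, $(\boldsymbol\varepsilon,\boldsymbol\mu^j,\mathbf W^j)$ is semi-balanced, where $\boldsymbol\mu^j=(\mu^j_1,\ldots,\mu^j_n)$ and $\mathbf W^j=(W^j_1,\ldots,W^j_n)$. Let $f_1,\ldots,f_n:[0,\infty]^k\to[0,\infty]$ be non-decreasing, subadditive functions with $f_i(\mathbf 0)=0$. Define $\mu_i(\mathbf Q)=f_i(\mu^1_i(\mathbf Q),\ldots,\mu^k_i(\mathbf Q))$ and $W_i(\varepsilon)=f_i(W^1_i(\varepsilon),\ldots,W^k_i(\varepsilon))$ for $i=1,\ldots,n$. Then $(\boldsymbol\varepsilon,\boldsymbol\mu,\mathbf W)$ is semi-balanced, where $\boldsymbol\mu=(\mu_1,\ldots,\mu_n)$, $\mathbf W=(W_1,\ldots,W_n)$.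
   Context: Fix a bounded $X\subseteq\mathbb R$; databases are $\mathbf x\in X^n$, and $\mathbf x^{(i)}$ is $\mathbf x$ with the $i$-th coordinate set to $0$. Queries are pairs $\mathbf Q=(\mathbf q,v)$, $\mathbf q\in\mathbb R^n$, $v\in[0,\infty]$. A query-answering mechanism $\mathcal K$ assigns to each query $\mathbf Q$ a map $\mathcal K_{\mathbf Q}$ from databases to real random variables. The privacy loss is $\varepsilon_i(\mathcal K_{\mathbf Q})=\sup_{S,\mathbf x}\left|\log\frac{\Pr[\mathcal K_{\mathbf Q}(\mathbf x)\in S]}{\Pr[\mathcal K_{\mathbf Q}(\mathbf x^{(i)})\in S]}\right|$ (over $\mathbf x\in X^n$, measurable $S\subseteq\mathbb R$), and $\boldsymbol\varepsilon=(\varepsilon_1,\ldots,\varepsilon_n)$. A contract function is a non-decreasing $W:[0,\infty]\to[0,\infty]$ with $W(0)=0$. Subadditive means $f(\mathbf x+\mathbf y)\le f(\mathbf x)+f(\mathbf y)$; non-decreasing means coordinatewise monotone. The determinacy relation $\mathbf S\rightarrow\mathbf Q$ is the smallest relation satisfying: (Summation) $\{(\mathbf q_1,v_1),\ldots,(\mathbf q_k,v_k)\}\rightarrow(\sum_j\mathbf q_j,\sum_jv_j)$; (Scalar multiplication) $\{(\mathbf q,v)\}\rightarrow(c\mathbf q,c^2v)$ for $c\in\mathbb R$; (Relaxation) $\{(\mathbf q,v)\}\rightarrow(\mathbf q,v')$ for $v\le v'$; (Transitivity) if $\mathbf S_j\rightarrow\mathbf Q_j$ for all $j$ and $\{\mathbf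 Q_1,\ldots,\mathbf Q_k\}\rightarrow\mathbf Q$ then $\mathbf S_1\uplus\cdots\uplus\mathbf S_k\rightarrow\mathbf Q$. A function $\mu$ from queries to $[0,\infty]$ is arbitrage-free if for every $m\ge1$, $\{\mathbf Q_1,\ldots,\mathbf Q_m\}\rightarrow\mathbf Q$ implies $\mu(\mathbf Q)\le\sum_j\mu(\mathbf Q_j)$. Micro-payments $\mu_i$ (functions from queries to $[0,\infty]$) are: fair if $q_i=0$ implies $\mu_i(\mathbf q,v)=0$; micro arbitrage-free if $\mu_i$ is arbitrage-free; compensating for $W_i$ if $\mu_i(\mathbf Q)\ge W_i(\varepsilon_i(\mathcal K_{\mathbf Q}))$ for all $\mathbf Q$. $(\boldsymbol\varepsilon,\boldsymbol\mu,\mathbf W)$ is semi-balanced if every $\mu_i$ is fair, micro arbitrage-free and compensating for $W_i$. *)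

theory Defs
  imports "HOL-Probability.Probability" "HOL-Library.Multiset"
begin

text \<open>Databases and query vectors are vectors indexed by a finite type 'n
  (the n individuals). A query is a pair (q, v) with q in R^n and v in [0,oo].\<close>

type_synonym 'n query = "(real ^ 'n) \<times> ennreal"

definition zero_at :: "'n \<Rightarrow> real ^ 'n \<Rightarrow> real ^ 'n" where
  "zero_at i x = (\<chi> j. if j = i then 0 else x $ j)"

definition abs_log_ratio :: "real \<Rightarrow> real \<Rightarrow> ennreal" where
  "abs_log_ratio a b =
     (if a = b then 0 else if a = 0 \<or> b = 0 then \<infinity> else ennreal \<bar>ln (a / b)\<bar>)"

text \<open>A query-answering mechanism K maps a query Q and a database x to the
  distribution (a measure on the reals) of the answer K_Q(x).
  Privacy loss of individual i for query Q.\<close>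
definition privacy_loss ::
  "(('n::finite) query \<Rightarrow> real ^ 'n \<Rightarrow> real measure) \<Rightarrow> real set \<Rightarrow> 'n \<Rightarrow> 'n query \<Rightarrow> ennreal" where
  "privacy_loss K X i Q =
     (SUP p \<in> {(S, x). S \<in> sets borel \<and> (\<forall>j. x $ j \<in> X)}.
        abs_log_ratio (measure (K Q (snd p)) (fst p)) (measure (K Q (zero_at i (snd p))) (fst p)))"

inductive determines :: "('n::finite) query multiset \<Rightarrow> 'n query \<Rightarrow> bool" where
  summation: "Qs \<noteq> [] \<Longrightarrow>
     determines (mset Qs) (sum_list (map fst Qs), sum_list (map snd Qs))"
| scalar: "determines {#(q, v)#} (c *\<^sub>R q, ennreal (c\<^sup>2) * v)"
| relax: "v \<le> v' \<Longrightarrow> determines {#(q, v)#} (q, v')"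
| trans: "Ps \<noteq> [] \<Longrightarrow> (\<forall>p \<in> set Ps. determines (fst p) (snd p)) \<Longrightarrow>
     determines (mset (map snd Ps)) Q \<Longrightarrow>
     determines (sum_list (map fst Ps)) Q"

definition arbitrage_free :: "(('n::finite) query \<Rightarrow> ennreal) \<Rightarrow> bool" where
  "arbitrage_free \<mu> \<longleftrightarrow>
     (\<forall>M Q. M \<noteq> {#} \<and> determines M Q \<longrightarrow> \<mu> Q \<le> sum_mset (image_mset \<mu> M))"

definition fair :: "'n::finite \<Rightarrow> ('n query \<Rightarrow> ennreal) \<Rightarrow> bool" where
  "fair i \<mu> \<longleftrightarrow> (\<forall>q v. q $ i = 0 \<longrightarrow> \<mu> (q, v) = 0)"

definition compensating ::
  "(('n::finite) query \<Rightarrow> real ^ 'n \<Rightarrow> real measure) \<Rightarrow> real set \<Rightarrow> 'n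
    \<Rightarrow> ('n query \<Rightarrow> ennreal) \<Rightarrow> (ennreal \<Rightarrow> ennreal) \<Rightarrow> bool" where
  "compensating K X i \<mu> W \<longleftrightarrow> (\<forall>Q. \<mu> Q \<ge> W (privacy_loss K X i Q))"

definition semi_balanced ::
  "(('n::finite) query \<Rightarrow> real ^ 'n \<Rightarrow> real measure) \<Rightarrow> real set
    \<Rightarrow> ('n \<Rightarrow> 'n query \<Rightarrow> ennreal) \<Rightarrow> ('n \<Rightarrow> ennreal \<Rightarrow> ennreal) \<Rightarrow> bool" where
  "semi_balanced K X \<mu> W \<longleftrightarrow>
     (\<forall>i. fair i (\<mu> i) \<and> arbitrage_free (\<mu> i) \<and> compensating K X i (\<mu> i) (W i))"

definition nondecreasing_vec :: "(ennreal ^ 'k \<Rightarrow> ennreal) \<Rightarrow> bool" where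
  "nondecreasing_vec f \<longleftrightarrow> (\<forall>x y. (\<forall>j. x $ j \<le> y $ j) \<longrightarrow> f x \<le> f y)"

definition subadditive_vec :: "(ennreal ^ 'k \<Rightarrow> ennreal) \<Rightarrow> bool" where
  "subadditive_vec f \<longleftrightarrow> (\<forall>x y. f (\<chi> j. x $ j + y $ j) \<le> f x + f y)"

end

theory Submission
  imports Defs
begin

text \<open>Each of the three properties is preserved coordinatewise by f: fairness since f(0) = 0,
  compensation by monotonicity, and arbitrage-freeness by monotonicity followed by
  subadditivity, which lets f pass through the sum of prices of a bundle.\<close>

lemma subadditive_vec_sum_mset:
  fixes F :: "ennreal ^ 'k \<Rightarrow> ennreal"
  assumes "subadditive_vec F" and "F (\<chi> j. 0) = 0"
  shows "F (\<chi> j. sum_mset (image_mset (g j) M)) \<le> sum_mset (image_mset (\<lambda>x. F (\<chi> j. g j x)) M)"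
proof (induction M)
  case empty
  then show ?case using assms(2) by simp
next
  case (add x M)
  have "F (\<chi> j. sum_mset (image_mset (g j) (add_mset x M)))
      = F (\<chi> j. (\<chi> j. g j x) $ j + (\<chi> j. sum_mset (image_mset (g j) M)) $ j)"
    by simp
  also have "\<dots> \<le> F (\<chi> j. g j x) + F (\<chi> j. sum_mset (image_mset (g j) M))"
    using assms(1) unfolding subadditive_vec_def by blast
  also have "\<dots> \<le> F (\<chi> j. g j x) + sum_mset (image_mset (\<lambda>x. F (\<chi> j. g j x)) M)"
    using add by (simp add: add_left_mono)
  finally show ?case by simp
qed

lemma fair_compose:
  assumes "\<And>j. fair i (\<mu> j)" and "F (\<chi> j. 0) = 0"
  shows "fair i (\<lambda>Q. F (\<chi> j. \<mu> j Q))"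
  using assms unfolding fair_def by simp

lemma compensating_compose:
  assumes "\<And>j. compensating K X i (\<mu> j) (W j)" and "nondecreasing_vec F"
  shows "compensating K X i (\<lambda>Q. F (\<chi> j. \<mu> j Q)) (\<lambda>e. F (\<chi> j. W j e))"
  using assms unfolding compensating_def nondecreasing_vec_def by simp

lemma arbitrage_free_compose:
  fixes \<mu> :: "'k::finite \<Rightarrow> ('n::finite) query \<Rightarrow> ennreal"
    and F :: "ennreal ^ 'k \<Rightarrow> ennreal"
  assumes "\<And>j. arbitrage_free (\<mu> j)"
    and "nondecreasing_vec F" and "subadditive_vec F" and "F (\<chi> j. 0) = 0"
  shows "arbitrage_free (\<lambda>Q. F (\<chi> j. \<mu> j Q))"
  unfolding arbitrage_free_def
proof (intro allI impI)
  fix M :: "'n query multiset" and Q :: "'n query"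
  assume "M \<noteq> {#} \<and> determines M Q"
  then have "\<And>j. \<mu> j Q \<le> sum_mset (image_mset (\<mu> j) M)"
    using assms(1) unfolding arbitrage_free_def by blast
  then have "F (\<chi> j. \<mu> j Q) \<le> F (\<chi> j. sum_mset (image_mset (\<mu> j) M))"
    using assms(2) unfolding nondecreasing_vec_def by simp
  also have "\<dots> \<le> sum_mset (image_mset (\<lambda>Q. F (\<chi> j. \<mu> j Q)) M)"
    using subadditive_vec_sum_mset assms(3,4) .
  finally show "F (\<chi> j. \<mu> j Q) \<le> sum_mset (image_mset (\<lambda>Q. F (\<chi> j. \<mu> j Q)) M)" .
qed

theorem proposition10:
  fixes K :: "('n::finite) query \<Rightarrow> real ^ 'n \<Rightarrow> real measure"
    and X :: "real set"
    and \<mu>s :: "'k::finite \<Rightarrow> 'n \<Rightarrow> 'n query \<Rightarrow> ennreal"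
    and Ws :: "'k \<Rightarrow> 'n \<Rightarrow> ennreal \<Rightarrow> ennreal"
    and f :: "'n \<Rightarrow> ennreal ^ 'k \<Rightarrow> ennreal"
  assumes "bounded X"
    and "\<forall>j. semi_balanced K X (\<mu>s j) (Ws j)"
    and "\<forall>i. nondecreasing_vec (f i)"
    and "\<forall>i. subadditive_vec (f i)"
    and "\<forall>i. f i (\<chi> j. 0) = 0"
  shows "semi_balanced K X (\<lambda>i Q. f i (\<chi> j. \<mu>s j i Q)) (\<lambda>i e. f i (\<chi> j. Ws j i e))"
  unfolding semi_balanced_def
proof (intro allI conjI)
  fix i
  have fair: "\<And>j. fair i (\<mu>s j i)"
    and arbitrage_free: "\<And>j. arbitrage_free (\<mu>s j i)"
    and compensating: "\<And>j. compensating K X i (\<mu>s j i) (Ws j i)"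
    using assms(2) unfolding semi_balanced_def by blast+
  show "fair i (\<lambda>Q. f i (\<chi> j. \<mu>s j i Q))"
    using assms(5) by (intro fair_compose fair) simp
  show "arbitrage_free (\<lambda>Q. f i (\<chi> j. \<mu>s j i Q))"
    using assms(3-5) by (intro arbitrage_free_compose arbitrage_free) simp_all
  show "compensating K X i (\<lambda>Q. f i (\<chi> j. \<mu>s j i Q)) (\<lambda>e. f i (\<chi> j. Ws j i e))"
    using assms(3) by (intro compensating_compose compensating) simp
qed

end
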